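(* Let $f\in L^1(\mathbb{R})$ be an even real-valued function and let $\mathcal{W}$ be a $C^1$ weak solution of $\mathcal{W}''(t)+(-1+f(t))\mathcal{W}(t)=0$ on $\mathbb{R}$ such that $\mathcal{W}(t)>0$ for all $t\ge0$ and $\lim_{t\to\infty}\mathcal{W}(t)=0$. Then no nontrivial solution of $\mathcal{Y}''+(-1+f)\mathcal{Y}=0$ vanishes at two distinct values of $t$ if and only if $\mathcal{W}'(0)\le0$.
   Context: A $C^1$ weak solution of $\mathcal{Y}''+k\mathcal{Y}=0$ with $k\in L^1_{loc}$ is a $C^1$ function $\mathcal{Y}$ with $\mathcal{Y}'$ absolutely continuous and $\mathcal{Y}''+k\mathcal{Y}=0$ almost everywhere. *)

theory Defs
  imports "HOL-Analysis.Analysis"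
begin

definition abs_continuous_on :: "real \<Rightarrow> real \<Rightarrow> (real \<Rightarrow> real) \<Rightarrow> bool" where
  "abs_continuous_on a b g \<longleftrightarrow>
     (\<forall>\<epsilon>>0. \<exists>\<delta>>0. \<forall>(n::nat) (l::nat \<Rightarrow> real) (r::nat \<Rightarrow> real).
        (\<forall>i<n. a \<le> l i \<and> l i \<le> r i \<and> r i \<le> b) \<and>
        (\<forall>i<n. \<forall>j<n. i \<noteq> j \<longrightarrow> {l i<..<r i} \<inter> {l j<..<r j} = {}) \<and>
        (\<Sum>i<n. r i - l i) < \<delta>
        \<longrightarrow> (\<Sum>i<n. \<bar>g (r i) - g (l i)\<bar>) < \<epsilon>)"

definition C1_weak_solution :: "(real \<Rightarrow> real) \<Rightarrow> (real \<Rightarrow> real) \<Rightarrow> bool" where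
  "C1_weak_solution k Y \<longleftrightarrow>
     (\<exists>Y'. (\<forall>t. (Y has_real_derivative Y' t) (at t)) \<and>
           continuous_on UNIV Y' \<and>
           (\<forall>a b. abs_continuous_on a b Y') \<and>
           (AE t in lborel. (Y' has_real_derivative (- k t * Y t)) (at t)))"

end

theory Submission
  imports Defs
begin

text \<open>The Wronskian of two weak solutions is constant: it is absolutely continuous with derivative
  zero almost everywhere. For an even potential, \<open>V t = W (- t)\<close> is again a solution, and the
  Wronskian of \<open>W\<close> and \<open>V\<close> is \<open>- 2 W(0) W'(0)\<close>, so \<open>(V / W)' = - 2 W(0) W'(0) / W\<^sup>2\<close>
  wherever \<open>W \<noteq> 0\<close>.

  If \<open>W'(0) \<le> 0\<close>, then \<open>V / W\<close> is nondecreasing on \<open>[0, \<infinity>)\<close> and equals 1 at 0, so \<open>W > 0\<close>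
  on the whole line; a positive solution forbids two zeros of a nontrivial solution \<open>Y\<close>, because
  \<open>Y / W\<close> would have a critical point, forcing the (constant) Wronskian and hence \<open>(Y / W)'\<close> to vanish.

  If \<open>W'(0) > 0\<close>, then \<open>(V / W)' \<le> - 2 W(0) W'(0) < 0\<close> once \<open>W < 1\<close>, so \<open>V / W \<rightarrow> -\<infinity>\<close>.
  Taking \<open>s > 0\<close> with \<open>V(s) < 0\<close>, the solution \<open>V(s) W - W(s) V\<close> vanishes at \<open>s\<close>, is negative
  at 0 and positive at some \<open>-u < 0\<close>, hence has a second zero in \<open>[-u, 0]\<close>.\<close>

section \<open>Absolute continuity\<close>

definition nonoverlapping_intervals :: "real \<Rightarrow> real \<Rightarrow> nat \<Rightarrow> (nat \<Rightarrow> real) \<Rightarrow> (nat \<Rightarrow> real) \<Rightarrow> bool" where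
  "nonoverlapping_intervals a b n l r \<longleftrightarrow>
     (\<forall>i<n. a \<le> l i \<and> l i \<le> r i \<and> r i \<le> b) \<and>
     (\<forall>i<n. \<forall>j<n. i \<noteq> j \<longrightarrow> {l i<..<r i} \<inter> {l j<..<r j} = {})"

lemma abs_continuous_onI:
  assumes "\<And>\<epsilon>. \<epsilon> > 0 \<Longrightarrow> \<exists>\<delta>>0. \<forall>n l r. nonoverlapping_intervals a b n l r \<and> (\<Sum>i<n. r i - l i) < \<delta>
             \<longrightarrow> (\<Sum>i<n. \<bar>g (r i) - g (l i)\<bar>) < \<epsilon>"
  shows "abs_continuous_on a b g"
  using assms unfolding abs_continuous_on_def nonoverlapping_intervals_def by simp

lemma abs_continuous_onE:
  assumes "abs_continuous_on a b g" "\<epsilon> > 0"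
  obtains \<delta> where "\<delta> > 0"
    "\<And>n l r. nonoverlapping_intervals a b n l r \<Longrightarrow> (\<Sum>i<n. r i - l i) < \<delta> \<Longrightarrow>
       (\<Sum>i<n. \<bar>g (r i) - g (l i)\<bar>) < \<epsilon>"
  using assms unfolding abs_continuous_on_def nonoverlapping_intervals_def by meson

lemma abs_continuous_on_id: "abs_continuous_on a b (\<lambda>x. x)"
proof (rule abs_continuous_onI)
  fix \<epsilon> :: real assume "\<epsilon> > 0"
  have "(\<Sum>i<n. \<bar>r i - l i\<bar>) = (\<Sum>i<n. r i - l i)" if "nonoverlapping_intervals a b n l r" for n l r
    using that by (intro sum.cong) (auto simp: nonoverlapping_intervals_def)
  then show "\<exists>\<delta>>0. \<forall>n l r. nonoverlapping_intervals a b n l r \<and> (\<Sum>i<n. r i - l i) < \<delta>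
             \<longrightarrow> (\<Sum>i<n. \<bar>r i - l i\<bar>) < \<epsilon>"
    using \<open>\<epsilon> > 0\<close> by auto
qed

lemma abs_continuous_on_dominated:
  assumes g: "abs_continuous_on a b g" and h: "abs_continuous_on a b h" and "C \<ge> 0"
    and dom: "\<And>l r. a \<le> l \<Longrightarrow> l \<le> r \<Longrightarrow> r \<le> b \<Longrightarrow> \<bar>F r - F l\<bar> \<le> C * (\<bar>g r - g l\<bar> + \<bar>h r - h l\<bar>)"
  shows "abs_continuous_on a b F"
proof (rule abs_continuous_onI)
  fix \<epsilon> :: real assume "\<epsilon> > 0"
  define \<epsilon>' where "\<epsilon>' = \<epsilon> / (2 * (C + 1))"
  have "\<epsilon>' > 0" using \<open>\<epsilon> > 0\<close> \<open>C \<ge> 0\<close> by (simp add: \<epsilon>'_def)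
  obtain \<delta>1 where "\<delta>1 > 0" and \<delta>1: "\<And>n l r. nonoverlapping_intervals a b n l r \<Longrightarrow>
      (\<Sum>i<n. r i - l i) < \<delta>1 \<Longrightarrow> (\<Sum>i<n. \<bar>g (r i) - g (l i)\<bar>) < \<epsilon>'"
    using abs_continuous_onE[OF g \<open>\<epsilon>' > 0\<close>] by blast
  obtain \<delta>2 where "\<delta>2 > 0" and \<delta>2: "\<And>n l r. nonoverlapping_intervals a b n l r \<Longrightarrow>
      (\<Sum>i<n. r i - l i) < \<delta>2 \<Longrightarrow> (\<Sum>i<n. \<bar>h (r i) - h (l i)\<bar>) < \<epsilon>'"
    using abs_continuous_onE[OF h \<open>\<epsilon>' > 0\<close>] by blast
  have "(\<Sum>i<n. \<bar>F (r i) - F (l i)\<bar>) < \<epsilon>"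
    if I: "nonoverlapping_intervals a b n l r" and len: "(\<Sum>i<n. r i - l i) < min \<delta>1 \<delta>2" for n l r
  proof -
    have "(\<Sum>i<n. \<bar>F (r i) - F (l i)\<bar>) \<le> (\<Sum>i<n. C * (\<bar>g (r i) - g (l i)\<bar> + \<bar>h (r i) - h (l i)\<bar>))"
      using I by (intro sum_mono dom) (auto simp: nonoverlapping_intervals_def)
    also have "\<dots> = C * ((\<Sum>i<n. \<bar>g (r i) - g (l i)\<bar>) + (\<Sum>i<n. \<bar>h (r i) - h (l i)\<bar>))"
      by (simp add: sum_distrib_left sum.distrib distrib_left)
    also have "\<dots> \<le> C * (2 * \<epsilon>')"
      using \<delta>1[OF I] \<delta>2[OF I] len \<open>C \<ge> 0\<close> by (intro mult_left_mono) auto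
    also have "\<dots> < \<epsilon>"
      using \<open>C \<ge> 0\<close> \<open>\<epsilon> > 0\<close> by (simp add: \<epsilon>'_def field_simps)
    finally show ?thesis .
  qed
  then show "\<exists>\<delta>>0. \<forall>n l r. nonoverlapping_intervals a b n l r \<and> (\<Sum>i<n. r i - l i) < \<delta>
             \<longrightarrow> (\<Sum>i<n. \<bar>F (r i) - F (l i)\<bar>) < \<epsilon>"
    using \<open>\<delta>1 > 0\<close> \<open>\<delta>2 > 0\<close> by (intro exI[of _ "min \<delta>1 \<delta>2"]) auto
qed

lemma abs_continuous_on_lipschitz:
  assumes "\<And>x y. a \<le> x \<Longrightarrow> x \<le> y \<Longrightarrow> y \<le> b \<Longrightarrow> \<bar>g y - g x\<bar> \<le> M * (y - x)"
  shows "abs_continuous_on a b g"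
proof (rule abs_continuous_on_dominated[OF abs_continuous_on_id abs_continuous_on_id, where C = "\<bar>M\<bar>"])
  fix l r assume "a \<le> l" "l \<le> r" "r \<le> b"
  then have "\<bar>g r - g l\<bar> \<le> M * (r - l)" using assms by blast
  also have "\<dots> \<le> \<bar>M\<bar> * (r - l)"
    using \<open>l \<le> r\<close> by (intro mult_right_mono) auto
  also have "\<dots> \<le> \<bar>M\<bar> * (\<bar>r - l\<bar> + \<bar>r - l\<bar>)"
    using \<open>l \<le> r\<close> by (intro mult_left_mono) auto
  finally show "\<bar>g r - g l\<bar> \<le> \<bar>M\<bar> * (\<bar>r - l\<bar> + \<bar>r - l\<bar>)" .
qed simp

lemma abs_continuous_on_lincomb:
  assumes "abs_continuous_on a b g" "abs_continuous_on a b h"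
  shows "abs_continuous_on a b (\<lambda>x. \<alpha> * g x + \<beta> * h x)"
proof (rule abs_continuous_on_dominated[OF assms, where C = "\<bar>\<alpha>\<bar> + \<bar>\<beta>\<bar>"])
  fix l r :: real
  have "\<alpha> * g r + \<beta> * h r - (\<alpha> * g l + \<beta> * h l) = \<alpha> * (g r - g l) + \<beta> * (h r - h l)"
    by (simp add: algebra_simps)
  then have "\<bar>\<alpha> * g r + \<beta> * h r - (\<alpha> * g l + \<beta> * h l)\<bar> \<le> \<bar>\<alpha>\<bar> * \<bar>g r - g l\<bar> + \<bar>\<beta>\<bar> * \<bar>h r - h l\<bar>"
    by (metis abs_mult abs_triangle_ineq)
  also have "\<dots> \<le> (\<bar>\<alpha>\<bar> + \<bar>\<beta>\<bar>) * (\<bar>g r - g l\<bar> + \<bar>h r - h l\<bar>)"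
    by (simp add: algebra_simps)
  finally show "\<bar>\<alpha> * g r + \<beta> * h r - (\<alpha> * g l + \<beta> * h l)\<bar> \<le> (\<bar>\<alpha>\<bar> + \<bar>\<beta>\<bar>) * (\<bar>g r - g l\<bar> + \<bar>h r - h l\<bar>)" .
qed simp

lemma continuous_on_Icc_abs_bound:
  fixes g :: "real \<Rightarrow> real"
  assumes "continuous_on {a..b} g"
  obtains M where "\<And>x. x \<in> {a..b} \<Longrightarrow> \<bar>g x\<bar> \<le> M"
  using compact_imp_bounded[OF compact_continuous_image[OF assms compact_Icc]]
  unfolding bounded_iff by fastforce

lemma abs_continuous_on_mult:
  assumes "abs_continuous_on a b g" "abs_continuous_on a b h"
    and "continuous_on {a..b} g" "continuous_on {a..b} h"
  shows "abs_continuous_on a b (\<lambda>x. g x * h x)"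
proof -
  obtain Mg where Mg: "\<And>x. x \<in> {a..b} \<Longrightarrow> \<bar>g x\<bar> \<le> Mg"
    using continuous_on_Icc_abs_bound[OF assms(3)] by blast
  obtain Mh where Mh: "\<And>x. x \<in> {a..b} \<Longrightarrow> \<bar>h x\<bar> \<le> Mh"
    using continuous_on_Icc_abs_bound[OF assms(4)] by blast
  show ?thesis
  proof (rule abs_continuous_on_dominated[OF assms(1,2), where C = "\<bar>Mg\<bar> + \<bar>Mh\<bar>"])
    fix l r assume "a \<le> l" "l \<le> r" "r \<le> b"
    then have "\<bar>g r\<bar> \<le> \<bar>Mg\<bar> + \<bar>Mh\<bar>" "\<bar>h l\<bar> \<le> \<bar>Mg\<bar> + \<bar>Mh\<bar>"
      using Mg[of r] Mh[of l] by auto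
    have "g r * h r - g l * h l = g r * (h r - h l) + h l * (g r - g l)"
      by (simp add: algebra_simps)
    then have "\<bar>g r * h r - g l * h l\<bar> \<le> \<bar>g r\<bar> * \<bar>h r - h l\<bar> + \<bar>h l\<bar> * \<bar>g r - g l\<bar>"
      by (metis abs_mult abs_triangle_ineq)
    also have "\<dots> \<le> (\<bar>Mg\<bar> + \<bar>Mh\<bar>) * \<bar>h r - h l\<bar> + (\<bar>Mg\<bar> + \<bar>Mh\<bar>) * \<bar>g r - g l\<bar>"
      using \<open>\<bar>g r\<bar> \<le> _\<close> \<open>\<bar>h l\<bar> \<le> _\<close> by (intro add_mono mult_right_mono) auto
    finally show "\<bar>g r * h r - g l * h l\<bar> \<le> (\<bar>Mg\<bar> + \<bar>Mh\<bar>) * (\<bar>g r - g l\<bar> + \<bar>h r - h l\<bar>)"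
      by (simp add: algebra_simps)
  qed simp
qed

lemma nonoverlapping_intervals_reflect:
  assumes "nonoverlapping_intervals a b n l r"
  shows "nonoverlapping_intervals (- b) (- a) n (\<lambda>i. - r i) (\<lambda>i. - l i)"
  using assms unfolding nonoverlapping_intervals_def
  by (simp add: minus_max_eq_min[symmetric] minus_min_eq_max[symmetric])

lemma abs_continuous_on_reflect:
  assumes g: "abs_continuous_on (- b) (- a) g"
  shows "abs_continuous_on a b (\<lambda>t. g (- t))"
proof (rule abs_continuous_onI)
  fix \<epsilon> :: real assume "\<epsilon> > 0"
  obtain \<delta> where "\<delta> > 0" and \<delta>: "\<And>n l r. nonoverlapping_intervals (- b) (- a) n l r \<Longrightarrow>
      (\<Sum>i<n. r i - l i) < \<delta> \<Longrightarrow> (\<Sum>i<n. \<bar>g (r i) - g (l i)\<bar>) < \<epsilon>"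
    using abs_continuous_onE[OF g \<open>\<epsilon> > 0\<close>] by blast
  have "(\<Sum>i<n. \<bar>g (- r i) - g (- l i)\<bar>) < \<epsilon>"
    if "nonoverlapping_intervals a b n l r" "(\<Sum>i<n. r i - l i) < \<delta>" for n l r
    using \<delta>[OF nonoverlapping_intervals_reflect[OF that(1)]] that(2)
    by (simp add: abs_minus_commute)
  then show "\<exists>\<delta>>0. \<forall>n l r. nonoverlapping_intervals a b n l r \<and> (\<Sum>i<n. r i - l i) < \<delta>
             \<longrightarrow> (\<Sum>i<n. \<bar>g (- r i) - g (- l i)\<bar>) < \<epsilon>"
    using \<open>\<delta> > 0\<close> by blast
qed

lemma tagged_division_of_Icc_memberE:
  fixes a b :: real
  assumes "p tagged_division_of {a..b}" "(x, K) \<in> p"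
  obtains u v where "K = {u..v}" "a \<le> u" "u \<le> x" "x \<le> v" "v \<le> b"
proof -
  obtain u v where K: "K = cbox u v" using tagged_division_ofD(4)[OF assms] by blast
  have "x \<in> K" "K \<subseteq> {a..b}" using tagged_division_ofD(2,3)[OF assms] by auto
  then show ?thesis using K that by auto
qed

lemma abs_continuous_on_tagged_division_subset:
  assumes ac: "abs_continuous_on a b g" and "\<epsilon> > 0"
  obtains \<delta> where "\<delta> > 0"
    "\<And>p q. p tagged_division_of {a..b} \<Longrightarrow> q \<subseteq> p \<Longrightarrow> (\<Sum>(x, K)\<in>q. measure lborel K) < \<delta> \<Longrightarrow>
       (\<Sum>(x, K)\<in>q. \<bar>g (Sup K) - g (Inf K)\<bar>) < \<epsilon>"
proof -
  obtain \<delta> where "\<delta> > 0" and \<delta>: "\<And>n l r. nonoverlapping_intervals a b n l r \<Longrightarrow>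
      (\<Sum>i<n. r i - l i) < \<delta> \<Longrightarrow> (\<Sum>i<n. \<bar>g (r i) - g (l i)\<bar>) < \<epsilon>"
    using abs_continuous_onE[OF ac \<open>\<epsilon> > 0\<close>] by blast
  have "(\<Sum>(x, K)\<in>q. \<bar>g (Sup K) - g (Inf K)\<bar>) < \<epsilon>"
    if p: "p tagged_division_of {a..b}" and "q \<subseteq> p" and small: "(\<Sum>(x, K)\<in>q. measure lborel K) < \<delta>" for p q
  proof -
    have "finite q" using tagged_division_ofD(1)[OF p] \<open>q \<subseteq> p\<close> finite_subset by blast
    then obtain h where h: "bij_betw h {..<card q} q"
      using ex_bij_betw_nat_finite by (metis atLeast0LessThan)
    define n where "n = card q"
    define l where "l i = Inf (snd (h i))" for i
    define r where "r i = Sup (snd (h i))" for i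
    have h_mem: "h i \<in> p" if "i < n" for i
      using h \<open>q \<subseteq> p\<close> that unfolding n_def bij_betw_def by auto
    have interval: "snd (h i) = {l i..r i} \<and> a \<le> l i \<and> l i \<le> r i \<and> r i \<le> b" if "i < n" for i
    proof -
      obtain x K where "h i = (x, K)" by force
      with tagged_division_of_Icc_memberE[OF p] h_mem[OF that] show ?thesis
        unfolding l_def r_def by (metis cSup_atLeastAtMost cInf_atLeastAtMost order_trans snd_conv)
    qed
    have "nonoverlapping_intervals a b n l r"
      unfolding nonoverlapping_intervals_def
    proof (intro conjI allI impI)
      fix i j assume "i < n" "j < n" "i \<noteq> j"
      then have "h i \<noteq> h j" using h unfolding bij_betw_def inj_on_def n_def by auto
      then have "interior (snd (h i)) \<inter> interior (snd (h j)) = {}"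
        using tagged_division_ofD(5)[OF p] h_mem \<open>i < n\<close> \<open>j < n\<close> by (metis prod.collapse)
      then show "{l i<..<r i} \<inter> {l j<..<r j} = {}"
        using interval \<open>i < n\<close> \<open>j < n\<close> by simp
    qed (use interval in auto)
    moreover have "(\<Sum>i<n. r i - l i) = (\<Sum>(x, K)\<in>q. measure lborel K)"
      using sum.reindex_bij_betw[OF h, of "\<lambda>(x, K). measure lborel K"] interval
      by (simp add: n_def case_prod_unfold)
    ultimately have "(\<Sum>i<n. \<bar>g (r i) - g (l i)\<bar>) < \<epsilon>" using \<delta> small by simp
    moreover have "(\<Sum>i<n. \<bar>g (r i) - g (l i)\<bar>) = (\<Sum>(x, K)\<in>q. \<bar>g (Sup K) - g (Inf K)\<bar>)"
      using sum.reindex_bij_betw[OF h, of "\<lambda>(x, K). \<bar>g (Sup K) - g (Inf K)\<bar>"]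
      by (simp add: n_def l_def r_def case_prod_unfold)
    ultimately show ?thesis by simp
  qed
  then show ?thesis using \<open>\<delta> > 0\<close> that by blast
qed

lemma negligible_fine_tags_small:
  fixes N :: "'a::euclidean_space set"
  assumes "negligible N" "\<delta> > 0"
  obtains \<gamma> where "gauge \<gamma>"
    "\<And>p. p tagged_division_of cbox a b \<Longrightarrow> \<gamma> fine p \<Longrightarrow>
       (\<Sum>(x, K)\<in>{(x, K) \<in> p. x \<in> N}. measure lborel K) < \<delta>"
proof -
  have "(indicator N has_integral (0::real)) (cbox a b)"
    using \<open>negligible N\<close> unfolding negligible_def by blast
  then obtain \<gamma> where "gauge \<gamma>" and \<gamma>: "\<And>p. p tagged_division_of cbox a b \<Longrightarrow> \<gamma> fine p \<Longrightarrow>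
      \<bar>\<Sum>(x, K)\<in>p. measure lborel K * indicator N x\<bar> < \<delta>"
    using \<open>\<delta> > 0\<close> unfolding has_integral by (fastforce simp: split_beta)
  have "(\<Sum>(x, K)\<in>{(x, K) \<in> p. x \<in> N}. measure lborel K) < \<delta>"
    if "p tagged_division_of cbox a b" "\<gamma> fine p" for p
  proof -
    have "finite p" using tagged_division_ofD(1)[OF that(1)] .
    then have "(\<Sum>(x, K)\<in>p. measure lborel K * indicator N x) = (\<Sum>(x, K)\<in>{(x, K) \<in> p. x \<in> N}. measure lborel K)"
      by (simp add: sum.inter_filter[symmetric] case_prod_unfold indicator_def Int_def)
    then show ?thesis using \<gamma>[OF that] by simp
  qed
  then show ?thesis using \<open>gauge \<gamma>\<close> that by blast
qed

lemma DERIV_zero_gauge: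
  fixes g :: "real \<Rightarrow> real"
  assumes g': "\<And>x. x \<in> S \<Longrightarrow> (g has_real_derivative 0) (at x)" and "e > 0"
  obtains \<gamma> where "gauge \<gamma>"
    "\<And>x u v. x \<in> S \<Longrightarrow> u \<le> x \<Longrightarrow> x \<le> v \<Longrightarrow> {u..v} \<subseteq> \<gamma> x \<Longrightarrow> \<bar>g v - g u\<bar> \<le> e * (v - u)"
proof -
  have "\<exists>d>0. \<forall>y. \<bar>y - x\<bar> < d \<longrightarrow> \<bar>g y - g x\<bar> \<le> e * \<bar>y - x\<bar>" if "x \<in> S" for x
  proof -
    have "\<forall>\<^sub>F y in at x. \<bar>(g y - g x) / (y - x)\<bar> < e"
      using g'[OF that] \<open>e > 0\<close> unfolding has_field_derivative_iff
      by (auto dest: tendstoD simp: dist_real_def)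
    then obtain d where "d > 0" and d: "\<And>y. y \<noteq> x \<Longrightarrow> \<bar>y - x\<bar> < d \<Longrightarrow> \<bar>(g y - g x) / (y - x)\<bar> < e"
      unfolding eventually_at dist_real_def by blast
    have "\<bar>g y - g x\<bar> \<le> e * \<bar>y - x\<bar>" if "\<bar>y - x\<bar> < d" for y
      using d[of y] that by (cases "y = x") (auto simp: abs_divide divide_less_eq)
    then show ?thesis using \<open>d > 0\<close> by blast
  qed
  then obtain d where d: "\<And>x. x \<in> S \<Longrightarrow> d x > 0 \<and> (\<forall>y. \<bar>y - x\<bar> < d x \<longrightarrow> \<bar>g y - g x\<bar> \<le> e * \<bar>y - x\<bar>)"
    by metis
  define \<gamma> where "\<gamma> x = (if x \<in> S then ball x (d x) else ball x 1)" for x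
  have "gauge \<gamma>" unfolding gauge_def \<gamma>_def using d by auto
  moreover have "\<bar>g v - g u\<bar> \<le> e * (v - u)"
    if "x \<in> S" "u \<le> x" "x \<le> v" "{u..v} \<subseteq> \<gamma> x" for x u v
  proof -
    have "u \<in> ball x (d x)" "v \<in> ball x (d x)"
      using that unfolding \<gamma>_def by (simp_all add: subset_iff)
    then have "\<bar>u - x\<bar> < d x" "\<bar>v - x\<bar> < d x"
      by (auto simp: dist_real_def)
    then have "\<bar>g u - g x\<bar> \<le> e * (x - u)" "\<bar>g v - g x\<bar> \<le> e * (v - x)"
      using d[OF \<open>x \<in> S\<close>] that(2,3) by fastforce+
    then show ?thesis by (simp add: algebra_simps abs_le_iff)
  qed
  ultimately show ?thesis using that by blast
qed

lemma tagged_division_increment_le_sum: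
  fixes g :: "real \<Rightarrow> real"
  assumes "a \<le> b" "p tagged_division_of {a..b}"
  shows "\<bar>g b - g a\<bar> \<le> (\<Sum>(x, K)\<in>p. \<bar>g (Sup K) - g (Inf K)\<bar>)"
proof -
  have "\<bar>g b - g a\<bar> = \<bar>\<Sum>(x, K)\<in>p. g (Sup K) - g (Inf K)\<bar>"
    using additive_tagged_division_1[OF assms, of g] by simp
  also have "\<dots> \<le> (\<Sum>(x, K)\<in>p. \<bar>g (Sup K) - g (Inf K)\<bar>)"
    by (rule order_trans[OF sum_abs]) (simp add: case_prod_unfold)
  finally show ?thesis .
qed

lemma tagged_division_sum_le_content:
  fixes g :: "real \<Rightarrow> real"
  assumes p: "p tagged_division_of {a..b}" and "a \<le> b" "e \<ge> 0" "q \<subseteq> p"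
    and le: "\<And>x K. (x, K) \<in> q \<Longrightarrow> \<bar>g (Sup K) - g (Inf K)\<bar> \<le> e * measure lborel K"
  shows "(\<Sum>(x, K)\<in>q. \<bar>g (Sup K) - g (Inf K)\<bar>) \<le> e * (b - a)"
proof -
  have "finite p" using tagged_division_ofD(1)[OF p] .
  have "(\<Sum>(x, K)\<in>q. \<bar>g (Sup K) - g (Inf K)\<bar>) \<le> (\<Sum>(x, K)\<in>q. e * measure lborel K)"
    using le by (intro sum_mono) auto
  also have "\<dots> \<le> e * (\<Sum>(x, K)\<in>p. measure lborel K)"
    unfolding sum_distrib_left[symmetric] case_prod_unfold using assms \<open>finite p\<close>
    by (intro mult_left_mono sum_mono2) auto
  also have "\<dots> = e * (b - a)"
    using additive_content_tagged_division[of p a b] p \<open>a \<le> b\<close> by simp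
  finally show ?thesis .
qed

text \<open>Off \<open>N\<close> the zero derivative makes each increment small compared with the length of its
  interval; the intervals tagged in \<open>N\<close> have small total length, so absolute continuity controls them.\<close>
lemma abs_continuous_on_zero_derivative_const:
  fixes g :: "real \<Rightarrow> real"
  assumes "a \<le> b" and ac: "abs_continuous_on a b g" and "negligible N"
    and g': "\<And>x. x \<in> {a..b} - N \<Longrightarrow> (g has_real_derivative 0) (at x)"
  shows "g b = g a"
proof -
  have "\<bar>g b - g a\<bar> \<le> e" if "e > 0" for e
  proof -
    define e1 where "e1 = e / (2 * (b - a + 1))"
    have "e1 > 0" using \<open>e > 0\<close> \<open>a \<le> b\<close> by (simp add: e1_def)
    obtain \<delta> where "\<delta> > 0" and small_sum: "\<And>p q. p tagged_division_of {a..b} \<Longrightarrow> q \<subseteq> p \<Longrightarrow>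
        (\<Sum>(x, K)\<in>q. measure lborel K) < \<delta> \<Longrightarrow> (\<Sum>(x, K)\<in>q. \<bar>g (Sup K) - g (Inf K)\<bar>) < e / 2"
      using abs_continuous_on_tagged_division_subset[OF ac, of "e / 2"] \<open>e > 0\<close> by auto
    obtain \<gamma>1 where "gauge \<gamma>1" and \<gamma>1: "\<And>x u v. x \<in> {a..b} - N \<Longrightarrow> u \<le> x \<Longrightarrow> x \<le> v \<Longrightarrow>
        {u..v} \<subseteq> \<gamma>1 x \<Longrightarrow> \<bar>g v - g u\<bar> \<le> e1 * (v - u)"
      using DERIV_zero_gauge[OF g' \<open>e1 > 0\<close>] by blast
    obtain \<gamma>2 where "gauge \<gamma>2" and \<gamma>2: "\<And>p. p tagged_division_of cbox a b \<Longrightarrow> \<gamma>2 fine p \<Longrightarrow>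
        (\<Sum>(x, K)\<in>{(x, K) \<in> p. x \<in> N}. measure lborel K) < \<delta>"
      using negligible_fine_tags_small[OF \<open>negligible N\<close> \<open>\<delta> > 0\<close>] by blast
    obtain p where p: "p tagged_division_of {a..b}" and fine: "(\<lambda>x. \<gamma>1 x \<inter> \<gamma>2 x) fine p"
      using fine_division_exists[OF gauge_Int[OF \<open>gauge \<gamma>1\<close> \<open>gauge \<gamma>2\<close>], of a b] by auto
    define p1 where "p1 = {(x, K) \<in> p. x \<notin> N}"
    define p2 where "p2 = {(x, K) \<in> p. x \<in> N}"
    have "(\<Sum>(x, K)\<in>p1. \<bar>g (Sup K) - g (Inf K)\<bar>) \<le> e1 * (b - a)"
    proof (rule tagged_division_sum_le_content[OF p \<open>a \<le> b\<close>])
      fix x K assume "(x, K) \<in> p1"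
      then have "(x, K) \<in> p" "x \<notin> N" by (auto simp: p1_def)
      moreover obtain u v where "K = {u..v}" "a \<le> u" "u \<le> x" "x \<le> v" "v \<le> b"
        using tagged_division_of_Icc_memberE[OF p \<open>(x, K) \<in> p\<close>] .
      moreover have "K \<subseteq> \<gamma>1 x" using fine \<open>(x, K) \<in> p\<close> by (auto simp: fine_def)
      ultimately show "\<bar>g (Sup K) - g (Inf K)\<bar> \<le> e1 * measure lborel K"
        using \<gamma>1[of x u v] by auto
    qed (use \<open>e1 > 0\<close> in \<open>auto simp: p1_def\<close>)
    also have "e1 * (b - a) \<le> e / 2"
      using \<open>e > 0\<close> \<open>a \<le> b\<close> by (simp add: e1_def field_simps)
    finally have sum_p1: "(\<Sum>(x, K)\<in>p1. \<bar>g (Sup K) - g (Inf K)\<bar>) \<le> e / 2" .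
    have "\<gamma>2 fine p" using fine by (auto simp: fine_def)
    then have "(\<Sum>(x, K)\<in>p2. measure lborel K) < \<delta>"
      using \<gamma>2 p by (simp add: p2_def)
    then have sum_p2: "(\<Sum>(x, K)\<in>p2. \<bar>g (Sup K) - g (Inf K)\<bar>) < e / 2"
      using small_sum[OF p, of p2] by (auto simp: p2_def)
    have "finite p" using tagged_division_ofD(1)[OF p] .
    have "(\<Sum>(x, K)\<in>p. \<bar>g (Sup K) - g (Inf K)\<bar>) =
        (\<Sum>(x, K)\<in>p1. \<bar>g (Sup K) - g (Inf K)\<bar>) + (\<Sum>(x, K)\<in>p2. \<bar>g (Sup K) - g (Inf K)\<bar>)"
      unfolding p1_def p2_def
      by (subst sum.union_disjoint[symmetric])
        (auto intro: sum.cong rev_finite_subset[OF \<open>finite p\<close>])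
    then show ?thesis
      using tagged_division_increment_le_sum[OF \<open>a \<le> b\<close> p, of g] sum_p1 sum_p2 by simp
  qed
  then show ?thesis using field_le_epsilon[of "\<bar>g b - g a\<bar>" 0] by simp
qed

section \<open>Weak solutions and the Wronskian\<close>

lemma AE_lborel_iff_negligible:
  "(AE x in lborel. P (x::real)) \<longleftrightarrow> (\<exists>N. negligible N \<and> (\<forall>x. x \<notin> N \<longrightarrow> P x))"
proof
  assume "AE x in lborel. P x"
  then obtain N where N: "{x \<in> space lborel. \<not> P x} \<subseteq> N" "emeasure lborel N = 0" "N \<in> sets lborel"
    by (rule AE_E)
  then have "N \<in> null_sets lborel" by auto
  then have "N \<in> null_sets lebesgue" by (rule null_sets_completionI)
  then have "negligible N" by (simp add: negligible_iff_null_sets)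
  moreover have "P x" if "x \<notin> N" for x using N(1) that by auto
  ultimately show "\<exists>N. negligible N \<and> (\<forall>x. x \<notin> N \<longrightarrow> P x)" by blast
next
  assume "\<exists>N. negligible N \<and> (\<forall>x. x \<notin> N \<longrightarrow> P x)"
  then obtain N where "negligible N" "\<And>x. x \<notin> N \<Longrightarrow> P x" by blast
  then have "N \<in> null_sets lebesgue" by (simp add: negligible_iff_null_sets)
  then have "AE x in lebesgue. P x" by (rule AE_I') (use \<open>\<And>x. x \<notin> N \<Longrightarrow> P x\<close> in auto)
  then show "AE x in lborel. P x" by (simp add: AE_completion_iff)
qed

definition weak_solution :: "(real \<Rightarrow> real) \<Rightarrow> (real \<Rightarrow> real) \<Rightarrow> (real \<Rightarrow> real) \<Rightarrow> bool" where
  "weak_solution k Y Y' \<longleftrightarrow>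
     (\<forall>t. (Y has_real_derivative Y' t) (at t)) \<and> continuous_on UNIV Y' \<and>
     (\<forall>a b. abs_continuous_on a b Y') \<and>
     (\<exists>N. negligible N \<and> (\<forall>t. t \<notin> N \<longrightarrow> (Y' has_real_derivative - k t * Y t) (at t)))"

lemma C1_weak_solution_iff: "C1_weak_solution k Y \<longleftrightarrow> (\<exists>Y'. weak_solution k Y Y')"
  by (simp add: C1_weak_solution_def weak_solution_def AE_lborel_iff_negligible)

lemma weak_solutionD:
  assumes "weak_solution k Y Y'"
  shows "(Y has_real_derivative Y' t) (at t)" "continuous_on UNIV Y'" "abs_continuous_on a b Y'"
    and "\<exists>N. negligible N \<and> (\<forall>t. t \<notin> N \<longrightarrow> (Y' has_real_derivative - k t * Y t) (at t))"
  using assms unfolding weak_solution_def by blast+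

lemma weak_solution_continuous: "weak_solution k Y Y' \<Longrightarrow> continuous_on UNIV Y"
  by (meson DERIV_isCont continuous_at_imp_continuous_on weak_solutionD(1))

lemma weak_solution_abs_continuous:
  assumes "weak_solution k Y Y'"
  shows "abs_continuous_on a b Y"
proof -
  obtain M where M: "\<And>x. x \<in> {a..b} \<Longrightarrow> \<bar>Y' x\<bar> \<le> M"
    using continuous_on_Icc_abs_bound continuous_on_subset[OF weak_solutionD(2)[OF assms]]
    by (metis subset_UNIV)
  show ?thesis
  proof (rule abs_continuous_on_lipschitz[where M = M])
    fix x y assume "a \<le> x" "x \<le> y" "y \<le> b"
    show "\<bar>Y y - Y x\<bar> \<le> M * (y - x)"
    proof (cases "x = y")
      case False
      then obtain z where "x < z" "z < y" "Y y - Y x = (y - x) * Y' z"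
        using MVT2[of x y Y Y'] weak_solutionD(1)[OF assms] \<open>x \<le> y\<close> by force
      moreover have "\<bar>Y' z\<bar> \<le> M" using M \<open>a \<le> x\<close> \<open>y \<le> b\<close> \<open>x < z\<close> \<open>z < y\<close> by simp
      ultimately show ?thesis using \<open>x \<le> y\<close> by (simp add: abs_mult mult.commute mult_right_mono)
    qed simp
  qed
qed

definition wronskian :: "(real \<Rightarrow> real) \<Rightarrow> (real \<Rightarrow> real) \<Rightarrow> (real \<Rightarrow> real) \<Rightarrow> (real \<Rightarrow> real) \<Rightarrow> real \<Rightarrow> real" where
  "wronskian Y Y' Z Z' t = Y t * Z' t - Y' t * Z t"

lemma wronskian_abs_continuous:
  assumes Y: "weak_solution k Y Y'" and Z: "weak_solution k Z Z'"
  shows "abs_continuous_on a b (wronskian Y Y' Z Z')"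
proof -
  have cont: "continuous_on {a..b} h" if "continuous_on UNIV h" for h :: "real \<Rightarrow> real"
    using continuous_on_subset[OF that] by blast
  have "abs_continuous_on a b (\<lambda>t. Y t * Z' t)"
    by (intro abs_continuous_on_mult cont weak_solution_abs_continuous[OF Y] weak_solutionD(2,3)[OF Z]
        weak_solution_continuous[OF Y])
  moreover have "abs_continuous_on a b (\<lambda>t. Y' t * Z t)"
    by (intro abs_continuous_on_mult cont weak_solution_abs_continuous[OF Z] weak_solutionD(2,3)[OF Y]
        weak_solution_continuous[OF Z])
  ultimately have "abs_continuous_on a b (\<lambda>t. 1 * (Y t * Z' t) + (- 1) * (Y' t * Z t))"
    by (rule abs_continuous_on_lincomb)
  then show ?thesis by (simp add: wronskian_def[abs_def])
qed

lemma wronskian_const: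
  assumes Y: "weak_solution k Y Y'" and Z: "weak_solution k Z Z'"
  shows "wronskian Y Y' Z Z' t = wronskian Y Y' Z Z' s"
proof -
  obtain NY where "negligible NY" and NY: "\<And>t. t \<notin> NY \<Longrightarrow> (Y' has_real_derivative - k t * Y t) (at t)"
    using weak_solutionD(4)[OF Y] by blast
  obtain NZ where "negligible NZ" and NZ: "\<And>t. t \<notin> NZ \<Longrightarrow> (Z' has_real_derivative - k t * Z t) (at t)"
    using weak_solutionD(4)[OF Z] by blast
  have "(wronskian Y Y' Z Z' has_real_derivative 0) (at x)" if "x \<notin> NY \<union> NZ" for x
  proof -
    have "(wronskian Y Y' Z Z' has_real_derivative
        (Y' x * Z' x + (- k x * Z x) * Y x) - ((- k x * Y x) * Z x + Z' x * Y' x)) (at x)"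
      unfolding wronskian_def[abs_def] using that
      by (intro DERIV_diff DERIV_mult weak_solutionD(1)[OF Y] weak_solutionD(1)[OF Z] NY NZ) auto
    then show ?thesis by (simp add: algebra_simps)
  qed
  then have "wronskian Y Y' Z Z' v = wronskian Y Y' Z Z' u" if "u \<le> v" for u v
    using abs_continuous_on_zero_derivative_const[OF that wronskian_abs_continuous[OF Y Z]
        negligible_Un[OF \<open>negligible NY\<close> \<open>negligible NZ\<close>]] by blast
  then show ?thesis by (metis linear)
qed

lemma DERIV_quotient_wronskian:
  assumes "(W has_real_derivative W' t) (at t)" "(Z has_real_derivative Z' t) (at t)" "W t \<noteq> 0"
  shows "((\<lambda>s. Z s / W s) has_real_derivative wronskian W W' Z Z' t / (W t)\<^sup>2) (at t)"
  using DERIV_divide[OF assms(2,1,3)]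
  by (simp add: wronskian_def power2_eq_square algebra_simps)

lemma weak_solution_lincomb:
  assumes Y: "weak_solution k Y Y'" and Z: "weak_solution k Z Z'"
  shows "weak_solution k (\<lambda>t. \<alpha> * Y t + \<beta> * Z t) (\<lambda>t. \<alpha> * Y' t + \<beta> * Z' t)"
proof -
  obtain NY where "negligible NY" and NY: "\<And>t. t \<notin> NY \<Longrightarrow> (Y' has_real_derivative - k t * Y t) (at t)"
    using weak_solutionD(4)[OF Y] by blast
  obtain NZ where "negligible NZ" and NZ: "\<And>t. t \<notin> NZ \<Longrightarrow> (Z' has_real_derivative - k t * Z t) (at t)"
    using weak_solutionD(4)[OF Z] by blast
  have "((\<lambda>t. \<alpha> * Y' t + \<beta> * Z' t) has_real_derivative - k t * (\<alpha> * Y t + \<beta> * Z t)) (at t)"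
    if "t \<notin> NY \<union> NZ" for t
    using DERIV_add[OF DERIV_cmult[OF NY] DERIV_cmult[OF NZ], of t \<alpha> \<beta>] that
    by (simp add: algebra_simps)
  moreover have "((\<lambda>t. \<alpha> * Y t + \<beta> * Z t) has_real_derivative \<alpha> * Y' t + \<beta> * Z' t) (at t)" for t
    by (intro DERIV_add DERIV_cmult weak_solutionD(1)[OF Y] weak_solutionD(1)[OF Z])
  moreover have "continuous_on UNIV (\<lambda>t. \<alpha> * Y' t + \<beta> * Z' t)"
    by (intro continuous_intros weak_solutionD(2)[OF Y] weak_solutionD(2)[OF Z])
  moreover have "abs_continuous_on a b (\<lambda>t. \<alpha> * Y' t + \<beta> * Z' t)" for a b
    by (intro abs_continuous_on_lincomb weak_solutionD(3)[OF Y] weak_solutionD(3)[OF Z])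
  ultimately show ?thesis
    unfolding weak_solution_def using negligible_Un[OF \<open>negligible NY\<close> \<open>negligible NZ\<close>] by blast
qed

lemma weak_solution_reflect:
  assumes Y: "weak_solution k Y Y'" and even: "\<And>t. k (- t) = k t"
  shows "weak_solution k (\<lambda>t. Y (- t)) (\<lambda>t. - Y' (- t))"
proof -
  obtain N where "negligible N" and N: "\<And>t. t \<notin> N \<Longrightarrow> (Y' has_real_derivative - k t * Y t) (at t)"
    using weak_solutionD(4)[OF Y] by blast
  have "negligible (uminus ` N)"
    using negligible_differentiable_image_negligible[OF _ \<open>negligible N\<close>, of uminus]
    by (simp add: differentiable_on_minus)
  moreover have "((\<lambda>t. - Y' (- t)) has_real_derivative - k t * Y (- t)) (at t)" if "t \<notin> uminus ` N" for t
  proof -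
    have "- t \<notin> N" using that by (metis image_eqI minus_minus)
    from DERIV_minus[OF DERIV_chain2[OF N[OF this] DERIV_minus[OF DERIV_ident]]]
    show ?thesis by (simp add: even)
  qed
  moreover have "((\<lambda>t. Y (- t)) has_real_derivative - Y' (- t)) (at t)" for t
    using DERIV_chain2[OF weak_solutionD(1)[OF Y] DERIV_minus[OF DERIV_ident]] by simp
  moreover have "continuous_on UNIV (\<lambda>t. - Y' (- t))"
    by (intro continuous_on_minus continuous_on_compose2[OF weak_solutionD(2)[OF Y]] continuous_intros) auto
  moreover have "abs_continuous_on a b (\<lambda>t. - Y' (- t))" for a b
    using abs_continuous_on_lincomb[OF abs_continuous_on_reflect[OF weak_solutionD(3)[OF Y]]
        abs_continuous_on_reflect[OF weak_solutionD(3)[OF Y]], where \<alpha> = "- 1" and \<beta> = 0]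
    by simp
  ultimately show ?thesis unfolding weak_solution_def by blast
qed

section \<open>Zeros of solutions for even potentials\<close>

lemma positive_solution_zeros_imp_zero:
  assumes W: "weak_solution k W W'" and W_pos: "\<And>t. W t > 0" and Y: "weak_solution k Y Y'"
    and "s \<noteq> t" "Y s = 0" "Y t = 0"
  shows "Y x = 0"
proof -
  obtain a b where "a < b" "Y a = 0" "Y b = 0"
    using assms(4-6) by (metis linorder_neqE)
  define c where "c = wronskian W W' Y Y' 0"
  have quotient': "((\<lambda>t. Y t / W t) has_real_derivative c / (W t)\<^sup>2) (at t)" for t
    using DERIV_quotient_wronskian[of W W' t Y Y', OF weak_solutionD(1)[OF W] weak_solutionD(1)[OF Y]] W_pos[of t]
      wronskian_const[OF W Y, of t 0]
    by (simp add: c_def)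
  obtain z where "Y b / W b - Y a / W a = (b - a) * (c / (W z)\<^sup>2)"
    using MVT2[OF \<open>a < b\<close>, of "\<lambda>t. Y t / W t" "\<lambda>t. c / (W t)\<^sup>2"] quotient' by blast
  then have "c = 0" using \<open>a < b\<close> \<open>Y a = 0\<close> \<open>Y b = 0\<close> W_pos[of z] by simp
  then have "Y x / W x = Y a / W a"
    using quotient' by (intro DERIV_isconst_all) simp
  then show ?thesis using \<open>Y a = 0\<close> W_pos[of x] by simp
qed

text \<open>For an even potential, the Wronskian of W and its reflection is \<open>- 2 W(0) W'(0)\<close>.\<close>
lemma reflection_quotient_derivative:
  assumes W: "weak_solution k W W'" and even: "\<And>t. k (- t) = k t" and "W t \<noteq> 0"
  shows "((\<lambda>t. W (- t) / W t) has_real_derivative - 2 * W 0 * W' 0 / (W t)\<^sup>2) (at t)"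
proof -
  have V: "weak_solution k (\<lambda>t. W (- t)) (\<lambda>t. - W' (- t))"
    using weak_solution_reflect[OF W even] .
  have "wronskian W W' (\<lambda>t. W (- t)) (\<lambda>t. - W' (- t)) t = - 2 * W 0 * W' 0"
    using wronskian_const[OF W V, of t 0] by (simp add: wronskian_def)
  then show ?thesis
    using DERIV_quotient_wronskian[of W W' t "\<lambda>t. W (- t)" "\<lambda>t. - W' (- t)", OF weak_solutionD(1)[OF W]
        weak_solutionD(1)[OF V] \<open>W t \<noteq> 0\<close>]
    by simp
qed

lemma even_potential_solution_positive:
  assumes W: "weak_solution k W W'" and even: "\<And>t. k (- t) = k t"
    and W_pos: "\<And>t. t \<ge> 0 \<Longrightarrow> W t > 0" and "W' 0 \<le> 0"
  shows "W t > 0"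
proof (cases "t \<ge> 0")
  case False
  have "W (- 0) / W 0 \<le> W (- (- t)) / W (- t)"
  proof (rule DERIV_nonneg_imp_nondecreasing[of 0 "- t" "\<lambda>t. W (- t) / W t"])
    fix s :: real assume "0 \<le> s"
    have "W 0 * W' 0 \<le> 0" using W_pos[of 0] \<open>W' 0 \<le> 0\<close> by (simp add: mult_nonneg_nonpos)
    then have "0 \<le> - 2 * W 0 * W' 0 / (W s)\<^sup>2" by (simp add: divide_nonpos_nonneg)
    moreover have "W s \<noteq> 0" using W_pos[of s] \<open>0 \<le> s\<close> by simp
    ultimately show "\<exists>y. ((\<lambda>t. W (- t) / W t) has_real_derivative y) (at s) \<and> 0 \<le> y"
      using reflection_quotient_derivative[OF W even] by blast
  qed (use False in simp)
  then have "W (- t) \<le> W t" using W_pos[of 0] W_pos[of "- t"] False by (simp add: field_simps)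
  then show ?thesis using W_pos[of "- t"] False by simp
qed (use W_pos in simp)

lemma DERIV_le_neg_unbounded_below:
  fixes g :: "real \<Rightarrow> real"
  assumes "c < 0"
    and g': "\<And>t. t \<ge> T \<Longrightarrow> (g has_real_derivative g' t) (at t)" "\<And>t. t \<ge> T \<Longrightarrow> g' t \<le> c"
  shows "\<exists>u\<ge>T. g u < B"
proof -
  define u where "u = T + (\<bar>g T\<bar> + \<bar>B\<bar> + 1) / - c"
  have "0 < (\<bar>g T\<bar> + \<bar>B\<bar> + 1) / - c" using \<open>c < 0\<close> by (intro divide_pos_pos) auto
  then have "T < u" unfolding u_def by linarith
  then obtain z where z: "T < z" "g u - g T = (u - T) * g' z"
    using MVT2[of T u g g'] g'(1) by force
  have "(u - T) * g' z \<le> (u - T) * c"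
    using g'(2)[of z] \<open>T < u\<close> \<open>T < z\<close> by (intro mult_left_mono) auto
  also have "\<dots> = - (\<bar>g T\<bar> + \<bar>B\<bar> + 1)"
    using \<open>c < 0\<close> by (simp add: u_def)
  finally have "g u < B" using z(2) by linarith
  then show ?thesis using \<open>T < u\<close> by (intro exI[of _ u]) auto
qed

lemma even_potential_solution_two_zeros:
  assumes W: "weak_solution k W W'" and even: "\<And>t. k (- t) = k t"
    and W_pos: "\<And>t. t \<ge> 0 \<Longrightarrow> W t > 0" and W_lim: "(W \<longlongrightarrow> 0) at_top" and "W' 0 > 0"
  obtains Z Z' u s t where "weak_solution k Z Z'" "Z u \<noteq> 0" "s \<noteq> t" "Z s = 0" "Z t = 0"
proof -
  define V where "V = (\<lambda>t. W (- t))"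
  define q where "q = (\<lambda>t. V t / W t)"
  define c where "c = - 2 * W 0 * W' 0"
  have "c < 0" using W_pos[of 0] \<open>W' 0 > 0\<close> by (simp add: c_def)
  obtain T where "T \<ge> 0" and W_small: "\<And>t. t \<ge> T \<Longrightarrow> W t < 1"
    using order_tendstoD(2)[OF W_lim, of 1] unfolding eventually_at_top_linorder
    by (metis order.trans linorder_linear zero_less_one)
  have q_below: "\<exists>u\<ge>T. q u < B" for B
  proof (rule DERIV_le_neg_unbounded_below[OF \<open>c < 0\<close>])
    fix t assume "t \<ge> T"
    then have "0 < W t" "W t < 1" using W_pos W_small \<open>T \<ge> 0\<close> by auto
    then show "(q has_real_derivative c / (W t)\<^sup>2) (at t)"
      using reflection_quotient_derivative[OF W even, of t] by (simp add: q_def V_def c_def)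
    have "(W t)\<^sup>2 \<le> 1" using \<open>0 < W t\<close> \<open>W t < 1\<close> by (simp add: abs_square_le_1)
    then show "c / (W t)\<^sup>2 \<le> c"
      using \<open>c < 0\<close> \<open>0 < W t\<close> by (simp add: divide_le_eq mult_le_cancel_left1)
  qed
  obtain s where "s \<ge> T" "q s < 0" using q_below by blast
  have "W s > 0" using W_pos \<open>s \<ge> T\<close> \<open>T \<ge> 0\<close> by simp
  then have "V s < 0" using \<open>q s < 0\<close> by (simp add: q_def divide_less_0_iff)
  have "s > 0" using \<open>q s < 0\<close> \<open>s \<ge> T\<close> \<open>T \<ge> 0\<close> W_pos[of 0] by (cases "s = 0") (auto simp: q_def V_def)
  obtain u where "u \<ge> T" "q u < W s / V s" using q_below by blast
  have "W u > 0" using W_pos \<open>u \<ge> T\<close> \<open>T \<ge> 0\<close> by auto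
  define Z where "Z = (\<lambda>t. V s * W t - W s * V t)"
  have Z: "weak_solution k Z (\<lambda>t. V s * W' t + W s * W' (- t))"
    using weak_solution_lincomb[OF W weak_solution_reflect[OF W even], where \<alpha> = "V s" and \<beta> = "- W s"]
    by (simp add: Z_def V_def)
  have "Z 0 < 0" using \<open>V s < 0\<close> \<open>W s > 0\<close> W_pos[of 0]
    by (simp add: Z_def V_def algebra_simps mult_pos_neg)
  have "q u * V s > W s"
    using mult_strict_right_mono_neg[OF \<open>q u < W s / V s\<close> \<open>V s < 0\<close>] \<open>V s < 0\<close> by simp
  then have "Z (- u) > 0"
    using \<open>W u > 0\<close> mult_strict_right_mono[OF \<open>q u * V s > W s\<close> \<open>W u > 0\<close>]
    by (simp add: Z_def V_def q_def algebra_simps)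
  obtain z where "- u \<le> z" "z \<le> 0" "Z z = 0"
    using IVT2'[of Z 0 0 "- u"] \<open>Z 0 < 0\<close> \<open>Z (- u) > 0\<close> \<open>u \<ge> T\<close> \<open>T \<ge> 0\<close>
      continuous_on_subset[OF weak_solution_continuous[OF Z]] by force
  moreover have "Z s = 0" by (simp add: Z_def)
  ultimately show ?thesis
    using that[OF Z, of "- u" s z] \<open>Z (- u) > 0\<close> \<open>s > 0\<close> by auto
qed

theorem proposition3p18:
  fixes f W :: "real \<Rightarrow> real"
  assumes f_L1: "integrable lborel f"
    and f_even: "\<And>t. f (- t) = f t"
    and W_sol: "C1_weak_solution (\<lambda>t. -1 + f t) W"
    and W_pos: "\<And>t. t \<ge> 0 \<Longrightarrow> W t > 0"
    and W_lim: "(W \<longlongrightarrow> 0) at_top"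
  shows "(\<forall>Y. C1_weak_solution (\<lambda>t. -1 + f t) Y \<and> (\<exists>t. Y t \<noteq> 0) \<longrightarrow>
            \<not> (\<exists>s t. s \<noteq> t \<and> Y s = 0 \<and> Y t = 0))
         \<longleftrightarrow> deriv W 0 \<le> 0"
proof -
  obtain W' where W: "weak_solution (\<lambda>t. -1 + f t) W W'"
    using W_sol C1_weak_solution_iff by blast
  have even: "\<And>t. -1 + f (- t) = -1 + f t" by (simp add: f_even)
  have "deriv W 0 = W' 0" using DERIV_imp_deriv[OF weak_solutionD(1)[OF W]] .
  show ?thesis
  proof
    assume no_two_zeros: "\<forall>Y. C1_weak_solution (\<lambda>t. -1 + f t) Y \<and> (\<exists>t. Y t \<noteq> 0) \<longrightarrow>
            \<not> (\<exists>s t. s \<noteq> t \<and> Y s = 0 \<and> Y t = 0)"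
    show "deriv W 0 \<le> 0"
    proof (rule ccontr)
      assume "\<not> deriv W 0 \<le> 0"
      then have "W' 0 > 0" using \<open>deriv W 0 = W' 0\<close> by simp
      then obtain Z Z' s t u where "weak_solution (\<lambda>t. -1 + f t) Z Z'" "Z u \<noteq> 0" "s \<noteq> t" "Z s = 0" "Z t = 0"
        using even_potential_solution_two_zeros[OF W even W_pos W_lim] by blast
      then show False using no_two_zeros C1_weak_solution_iff by blast
    qed
  next
    assume "deriv W 0 \<le> 0"
    then have "W t > 0" for t
      using even_potential_solution_positive[OF W even W_pos] \<open>deriv W 0 = W' 0\<close> by simp
    then show "\<forall>Y. C1_weak_solution (\<lambda>t. -1 + f t) Y \<and> (\<exists>t. Y t \<noteq> 0) \<longrightarrow>
            \<not> (\<exists>s t. s \<noteq> t \<and> Y s = 0 \<and> Y t = 0)"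
      using positive_solution_zeros_imp_zero[OF W] C1_weak_solution_iff by metis
  qed
qed

end
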